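(* Let $\mathcal{A}$ be a complex Banach algebra with identity, $\lambda$ a nonzero complex number, and $M = \begin{pmatrix} A & B \\ C & D \end{pmatrix} \in M_2(\mathcal{A})$ with $A, D \in \mathcal{A}^d$. If $$BD = \lambda A B D^\pi,\quad CA = \lambda D C A^\pi,\quad BC = 0,$$ then $M \in M_2(\mathcal{A})^d$ and $$M^d = \begin{pmatrix} A^d & 0 \\ 0 & D^d \end{pmatrix} + \sum_{n=0}^{\infty} (P^d)^{n+2} Q M^n,$$ where $P = \begin{pmatrix} A & 0 \\ 0 & D \end{pmatrix}$, $P^d = \begin{pmatrix} A^d & 0 \\ 0 & D^d \end{pmatrix}$ and $Q = \begin{pmatrix} 0 & B \\ C & 0 \end{pmatrix}$.
   Context: $M_2(\mathcal{A})$ is the Banach algebra of $2\times 2$ matrices over $\mathcal{A}$. An element $x$ of a Banach algebra has a generalized Drazin (g-Drazin) inverse $x^d$ if $x^d$ commutes with $x$, $x^d = x^dxx^d$ and $x - x^2x^d$ is quasinilpotent (i.e. $\lim\|y^n\|^{1/n}=0$ for $y=x-x^2x^d$); $\mathcal{A}^d$ (resp. $M_2(\mathcal{A})^d$) denotes the set of g-Drazin invertible elements. The spectral idempotent is $x^\pi = 1 - xx^d$. *)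

theory Defs
  imports "HOL-Analysis.Analysis"
begin

class complex_banach_algebra_1 = real_normed_algebra_1 + banach +
  fixes scaleC :: "complex \<Rightarrow> 'a \<Rightarrow> 'a"
  assumes scaleC_add_right: "scaleC a (x + y) = scaleC a x + scaleC a y"
    and scaleC_add_left: "scaleC (a + b) x = scaleC a x + scaleC b x"
    and scaleC_scaleC: "scaleC a (scaleC b x) = scaleC (a * b) x"
    and scaleC_one: "scaleC 1 x = x"
    and scaleR_scaleC: "scaleR r x = scaleC (of_real r) x"
    and norm_scaleC: "norm (scaleC a x) = cmod a * norm x"
    and mult_scaleC_left: "scaleC a x * y = scaleC a (x * y)"
    and mult_scaleC_right: "x * scaleC a y = scaleC a (x * y)"

definition quasinilpotent :: "'a::real_normed_algebra_1 \<Rightarrow> bool" where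
  "quasinilpotent y \<longleftrightarrow> (\<lambda>n. root n (norm (y ^ n))) \<longlonglongrightarrow> 0"

definition gdrazin_inv :: "'a::real_normed_algebra_1 \<Rightarrow> 'a \<Rightarrow> bool" where
  "gdrazin_inv x y \<longleftrightarrow> y * x = x * y \<and> y = y * x * y \<and> quasinilpotent (x - x^2 * y)"

text \<open>The norm is the (Euclidean) product norm on entries; it is equivalent to any
  Banach algebra norm on M_2(A), so quasinilpotence does not depend on it.\<close>

type_synonym 'a mat2 = "'a ^ 2 ^ 2"

definition blk2 :: "'a \<Rightarrow> 'a \<Rightarrow> 'a \<Rightarrow> 'a \<Rightarrow> 'a::zero mat2" where
  "blk2 a b c d = (\<chi> i j. if i = 1 then (if j = 1 then a else b) else (if j = 1 then c else d))"

primrec mpow :: "'a::semiring_1 mat2 \<Rightarrow> nat \<Rightarrow> 'a mat2" where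
  "mpow M 0 = mat 1"
| "mpow M (Suc n) = M ** mpow M n"

definition mquasinilpotent :: "'a::real_normed_algebra_1 mat2 \<Rightarrow> bool" where
  "mquasinilpotent Y \<longleftrightarrow> (\<lambda>n. root n (norm (mpow Y n))) \<longlonglongrightarrow> 0"

definition mgdrazin_inv :: "'a::real_normed_algebra_1 mat2 \<Rightarrow> 'a mat2 \<Rightarrow> bool" where
  "mgdrazin_inv X Y \<longleftrightarrow> Y ** X = X ** Y \<and> Y = Y ** X ** Y
     \<and> mquasinilpotent (X - X ** X ** Y)"

end

theory Submission
  imports Defs
begin

text \<open>
  The hypotheses force \<open>B D\<^sup>d = 0\<close> and \<open>B D = \<lambda> A B\<close>, so that
  \<open>\<lambda> A\<^sup>d B = A\<^sup>d (A\<^sup>d B) (D - D\<^sup>2 D\<^sup>d)\<close>; iterating and using quasinilpotence of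
  \<open>D - D\<^sup>2 D\<^sup>d\<close> gives \<open>A\<^sup>d B = 0\<close>, and symmetrically \<open>D\<^sup>d C = 0\<close>. Hence every
  term of the series vanishes and \<open>P\<^sup>d\<close> itself is the g-Drazin inverse of \<open>M\<close>.
  The only analytic point is that \<open>M - M\<^sup>2 P\<^sup>d\<close> has quasinilpotent diagonal entries
  \<open>a, d\<close> and off-diagonal entries with \<open>B d = \<lambda> a B\<close>, \<open>C a = \<lambda> d C\<close>, \<open>B C = 0\<close>.
  Its powers then have an explicit form whose entries are \<open>a\<^sup>n\<close>, \<open>d\<^sup>n\<close>,
  \<open>a\<^sup>n\<^sup>-\<^sup>1 B\<close>, \<open>d\<^sup>n\<^sup>-\<^sup>1 C\<close>, \<open>d\<^sup>n\<^sup>-\<^sup>2 C B\<close> times coefficients of exponential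
  growth, and all of these decay faster than any geometric sequence.
\<close>

definition superexp_decay :: "(nat \<Rightarrow> real) \<Rightarrow> bool" where
  "superexp_decay f \<longleftrightarrow> (\<forall>e>0. \<exists>K. \<forall>n. f n \<le> K * e ^ n)"

lemma superexp_decayI:
  "(\<And>e. e > 0 \<Longrightarrow> \<exists>K. \<forall>n. f n \<le> K * e ^ n) \<Longrightarrow> superexp_decay f"
  unfolding superexp_decay_def by blast

lemma superexp_decayD:
  "superexp_decay f \<Longrightarrow> e > 0 \<Longrightarrow> \<exists>K. \<forall>n. f n \<le> K * e ^ n"
  unfolding superexp_decay_def by blast

lemma superexp_decay_add:
  assumes "superexp_decay f" "superexp_decay g"
  shows "superexp_decay (\<lambda>n. f n + g n)"
proof (rule superexp_decayI)
  fix e :: real assume "e > 0"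
  then obtain K1 K2 where "\<And>n. f n \<le> K1 * e ^ n" "\<And>n. g n \<le> K2 * e ^ n"
    using assms by (meson superexp_decayD)
  then have "\<forall>n. f n + g n \<le> (K1 + K2) * e ^ n"
    by (simp add: add_mono distrib_right)
  then show "\<exists>K. \<forall>n. f n + g n \<le> K * e ^ n" ..
qed

lemma superexp_decay_geometric_mult:
  assumes "superexp_decay f" and "L > 0" "M \<ge> 0" and "\<And>n. g n \<le> M * L ^ n * f n"
  shows "superexp_decay g"
proof (rule superexp_decayI)
  fix e :: real assume "e > 0"
  then obtain K where K: "\<And>n. f n \<le> K * (e / L) ^ n"
    using assms(1,2) superexp_decayD by (metis divide_pos_pos)
  have "g n \<le> (M * K) * e ^ n" for n
  proof -
    have "g n \<le> M * L ^ n * (K * (e / L) ^ n)"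
      using assms(2,3,4) K[of n] by (meson mult_left_mono order_trans zero_le_mult_iff zero_le_power less_imp_le)
    also have "\<dots> = (M * K) * e ^ n"
      using assms(2) by (simp add: power_divide field_simps)
    finally show ?thesis .
  qed
  then show "\<exists>K. \<forall>n. g n \<le> K * e ^ n" by blast
qed

lemma superexp_decay_shift:
  assumes "superexp_decay f"
  shows "superexp_decay (\<lambda>n. f (n - k))"
proof (rule superexp_decayI)
  fix e :: real assume "e > 0"
  define e' where "e' = min e 1"
  have e': "0 < e'" "e' \<le> 1" "e' \<le> e" using \<open>e > 0\<close> by (auto simp: e'_def)
  obtain K where K: "\<And>n. f n \<le> K * e' ^ n" using assms e'(1) superexp_decayD by blast
  have "f (n - k) \<le> (\<bar>K\<bar> / e' ^ k) * e ^ n" for n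
  proof -
    have "e' ^ (n - k) * e' ^ k \<le> e' ^ n"
      using e' by (cases "k \<le> n") (simp_all add: power_add[symmetric] power_decreasing)
    then have "e' ^ (n - k) \<le> e' ^ n / e' ^ k"
      using e' by (simp add: pos_le_divide_eq)
    then have "f (n - k) \<le> \<bar>K\<bar> * (e' ^ n / e' ^ k)"
      using K[of "n - k"] by (meson abs_ge_self abs_ge_zero mult_mono order_trans zero_le_power less_imp_le e'(1))
    also have "\<dots> \<le> \<bar>K\<bar> * (e ^ n / e' ^ k)"
      using e' by (intro mult_left_mono divide_right_mono power_mono) auto
    finally show ?thesis by simp
  qed
  then show "\<exists>K. \<forall>n. f (n - k) \<le> K * e ^ n" by blast
qed

lemma superexp_decay_root_tendsto_zero:
  assumes "superexp_decay f" and "\<And>n. f n \<ge> 0"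
  shows "(\<lambda>n. root n (f n)) \<longlonglongrightarrow> 0"
proof (rule LIMSEQ_I)
  fix r :: real assume r: "0 < r"
  obtain K where K: "\<And>n. f n \<le> K * (r / 2) ^ n"
    using assms(1) r superexp_decayD by (metis half_gt_zero)
  have K_pos: "max K 1 > 0" by simp
  have "(\<lambda>n. root n (max K 1)) \<longlonglongrightarrow> 1" by (rule LIMSEQ_root_const) simp
  then have "eventually (\<lambda>n. root n (max K 1) < 2) sequentially" by (rule order_tendstoD) simp
  then obtain N where N: "\<And>n. n \<ge> N \<Longrightarrow> root n (max K 1) < 2"
    by (auto simp: eventually_sequentially)
  have "norm (root n (f n) - 0) < r" if "n \<ge> Suc N" for n
  proof -
    have n: "n > 0" using that by simp
    have "f n \<le> max K 1 * (r / 2) ^ n"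
      using K[of n] r by (meson max.cobounded1 mult_right_mono order_trans zero_le_power half_gt_zero less_imp_le)
    then have "root n (f n) \<le> root n (max K 1 * (r / 2) ^ n)" using n by simp
    also have "\<dots> = root n (max K 1) * (r / 2)"
      using n r by (simp add: real_root_mult real_root_power_cancel)
    also have "\<dots> < 2 * (r / 2)"
      using N[of n] that r by (intro mult_strict_right_mono) auto
    finally show ?thesis using real_root_ge_zero[OF assms(2)[of n]] by simp
  qed
  then show "\<exists>N. \<forall>n\<ge>N. norm (root n (f n) - 0) < r" by blast
qed

lemma quasinilpotent_eventually_norm_power_le:
  fixes x :: "'a::real_normed_algebra_1"
  assumes "quasinilpotent x" "e > 0"
  shows "eventually (\<lambda>n. norm (x ^ n) \<le> e ^ n) sequentially"
proof -
  have "eventually (\<lambda>n. root n (norm (x ^ n)) < e \<and> n > 0) sequentially"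
    using assms unfolding quasinilpotent_def
    by (intro eventually_conj order_tendstoD(2) eventually_gt_at_top)
  then show ?thesis
  proof (rule eventually_mono)
    fix n assume "root n (norm (x ^ n)) < e \<and> n > 0"
    then have "root n (norm (x ^ n)) ^ n \<le> e ^ n"
      by (intro power_mono) auto
    then show "norm (x ^ n) \<le> e ^ n" using \<open>_ \<and> n > 0\<close> by (simp add: real_root_pow_pos2)
  qed
qed

lemma quasinilpotent_superexp_decay:
  fixes x :: "'a::real_normed_algebra_1"
  assumes "quasinilpotent x"
  shows "superexp_decay (\<lambda>n. norm (x ^ n))"
proof (rule superexp_decayI)
  fix e :: real assume e: "e > 0"
  obtain N where N: "\<And>n. n \<ge> N \<Longrightarrow> norm (x ^ n) \<le> e ^ n"
    using quasinilpotent_eventually_norm_power_le[OF assms e] by (auto simp: eventually_sequentially)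
  define K where "K = 1 + (\<Sum>k<N. norm (x ^ k) / e ^ k)"
  have sum_nonneg: "0 \<le> (\<Sum>k<N. norm (x ^ k) / e ^ k)"
    using e by (intro sum_nonneg) auto
  have "norm (x ^ n) \<le> K * e ^ n" for n
  proof (cases "n < N")
    case True
    have "norm (x ^ n) / e ^ n \<le> (\<Sum>k<N. norm (x ^ k) / e ^ k)"
      using True e by (intro member_le_sum) auto
    also have "\<dots> \<le> K" unfolding K_def by simp
    finally show ?thesis using e by (simp add: divide_le_eq)
  next
    case False
    then have "norm (x ^ n) \<le> 1 * e ^ n" using N by simp
    also have "\<dots> \<le> K * e ^ n" using sum_nonneg e unfolding K_def by (intro mult_right_mono) auto
    finally show ?thesis .
  qed
  then show "\<exists>K. \<forall>n. norm (x ^ n) \<le> K * e ^ n" by blast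
qed

context complex_banach_algebra_1
begin

lemma scaleC_zero_right [simp]: "scaleC a 0 = 0"
  using scaleC_add_right[of a 0 0] by simp

lemma scaleC_zero_left [simp]: "scaleC 0 x = 0"
  using scaleC_add_left[of 0 0 x] by simp

lemma scaleC_power_intertwining:
  assumes "x * d = scaleC lam (a * x)"
  shows "x * d ^ n = scaleC (lam ^ n) (a ^ n * x)"
proof (induction n)
  case 0
  then show ?case by (simp add: scaleC_one)
next
  case (Suc n)
  have "x * d ^ Suc n = x * d * d ^ n" by (simp add: mult.assoc)
  also have "\<dots> = scaleC lam (a * (x * d ^ n))"
    using assms by (simp add: mult_scaleC_left mult.assoc)
  also have "\<dots> = scaleC (lam ^ Suc n) (a ^ Suc n * x)"
    using Suc by (simp add: mult_scaleC_right scaleC_scaleC mult.assoc)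
  finally show ?case .
qed

end

lemma quasinilpotent_eigen_annihilates:
  fixes y g d :: "'a::complex_banach_algebra_1"
  assumes "lam \<noteq> 0" and "quasinilpotent d" and eq: "scaleC lam y = g * y * d"
  shows "y = 0"
proof -
  have pow: "scaleC (lam ^ n) y = g ^ n * y * d ^ n" for n
  proof (induction n)
    case 0
    then show ?case by (simp add: scaleC_one)
  next
    case (Suc n)
    have "scaleC (lam ^ Suc n) y = g ^ n * scaleC lam y * d ^ n"
      using Suc by (simp add: scaleC_scaleC[symmetric] mult_scaleC_left mult_scaleC_right)
    also have "\<dots> = g ^ Suc n * y * d ^ Suc n"
      by (simp only: eq power_Suc2[of g] power_Suc[of d] mult.assoc)
    finally show ?case .
  qed
  define e where "e = cmod lam / (norm g + 1)"
  have "norm g + 1 > 0" by (simp add: add_nonneg_pos)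
  then have e: "e > 0" "norm g * e < cmod lam"
    using assms(1) by (auto simp: e_def field_simps)
  obtain n where n: "n > 0" "norm (d ^ n) \<le> e ^ n"
    using eventually_conj[OF quasinilpotent_eventually_norm_power_le[OF assms(2) e(1)]
        eventually_gt_at_top[of 0]]
    unfolding eventually_sequentially by blast
  have "cmod lam ^ n * norm y = norm (g ^ n * y * d ^ n)"
    by (simp add: pow[symmetric] norm_scaleC norm_power)
  also have "\<dots> \<le> norm (g ^ n * y) * norm (d ^ n)" by (rule norm_mult_ineq)
  also have "\<dots> \<le> norm g ^ n * norm y * e ^ n"
    by (intro mult_mono order_trans[OF norm_mult_ineq] mult_right_mono norm_power_ineq n(2)) auto
  also have "\<dots> = (norm g * e) ^ n * norm y" by (simp add: power_mult_distrib)
  finally have "cmod lam ^ n * norm y \<le> (norm g * e) ^ n * norm y" .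
  moreover have "(norm g * e) ^ n < cmod lam ^ n"
    using e n(1) by (intro power_strict_mono) auto
  ultimately have "\<not> norm y > 0" by (auto simp: mult_le_cancel_right)
  then show "y = 0" by simp
qed

lemma gdrazin_intertwining:
  fixes A B D Ad Dd :: "'a::complex_banach_algebra_1"
  assumes lam: "lam \<noteq> 0" and gA: "gdrazin_inv A Ad" and gD: "gdrazin_inv D Dd"
    and BD: "B * D = scaleC lam (A * B * (1 - D * Dd))"
  shows "B * Dd = 0" and "Ad * B = 0"
    and "B * (D - D\<^sup>2 * Dd) = scaleC lam ((A - A\<^sup>2 * Ad) * B)"
proof -
  have DDd: "Dd * D = D * Dd" "Dd = Dd * D * Dd" and qD: "quasinilpotent (D - D\<^sup>2 * Dd)"
    using gD unfolding gdrazin_inv_def by auto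
  have AAd: "Ad * A = A * Ad" "Ad = Ad * A * Ad"
    using gA unfolding gdrazin_inv_def by auto
  have "D * Dd * Dd = Dd"
    using DDd by (metis mult.assoc)
  then have "(1 - D * Dd) * (Dd * Dd) = 0"
    by (simp add: left_diff_distrib flip: mult.assoc)
  moreover have "B * Dd = B * D * (Dd * Dd)"
    using DDd by (metis mult.assoc)
  ultimately show BDd: "B * Dd = 0"
    by (simp add: BD mult_scaleC_left mult.assoc)
  then have "A * B * (D * Dd) = 0"
    using DDd(1) by (metis mult.assoc mult_zero_left mult_zero_right)
  then have BD': "B * D = scaleC lam (A * B)"
    using BD by (simp add: right_diff_distrib)
  have "B * (D\<^sup>2 * Dd) = 0"
    using BDd DDd(1) by (metis mult.assoc mult_zero_left power2_eq_square)
  then have Bd: "B * (D - D\<^sup>2 * Dd) = scaleC lam (A * B)"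
    using BD' by (simp add: right_diff_distrib)
  have "scaleC lam (Ad * B) = Ad * (Ad * B) * (D - D\<^sup>2 * Dd)"
  proof -
    have "Ad = Ad * Ad * A" using AAd by (metis mult.assoc)
    then have "scaleC lam (Ad * B) = scaleC lam (Ad * Ad * A * B)" by simp
    also have "\<dots> = Ad * Ad * (B * (D - D\<^sup>2 * Dd))"
      by (simp add: Bd mult_scaleC_right mult.assoc)
    finally show ?thesis by (simp add: mult.assoc)
  qed
  then show AdB: "Ad * B = 0"
    by (rule quasinilpotent_eigen_annihilates[OF lam qD])
  show "B * (D - D\<^sup>2 * Dd) = scaleC lam ((A - A\<^sup>2 * Ad) * B)"
    using Bd AdB by (simp add: left_diff_distrib power2_eq_square mult.assoc)
qed

lemma blk2_nth [simp]:
  "blk2 a b c d $ 1 $ 1 = a" "blk2 a b c d $ 1 $ 2 = b"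
  "blk2 a b c d $ 2 $ 1 = c" "blk2 a b c d $ 2 $ 2 = d"
  by (simp_all add: blk2_def)

lemma blk2_eq_iff: "M = blk2 a b c d \<longleftrightarrow> M$1$1 = a \<and> M$1$2 = b \<and> M$2$1 = c \<and> M$2$2 = d"
  by (auto simp: blk2_def vec_eq_iff forall_2)

lemma blk2_mult:
  "blk2 a b c d ** blk2 e f g h = blk2 (a*e + b*g) (a*f + b*h) (c*e + d*g) (c*f + d*h)"
  by (simp add: blk2_eq_iff matrix_matrix_mult_def sum_2)

lemma blk2_diff: "blk2 a b c d - blk2 e f g h = blk2 (a-e) (b-f) (c-g) (d-h)"
  by (simp add: blk2_eq_iff)

lemma zero_eq_blk2: "(0::'a::zero mat2) = blk2 0 0 0 0"
  by (simp add: blk2_eq_iff)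

lemma mat_1_eq_blk2: "(mat 1::'a::semiring_1 mat2) = blk2 1 0 0 1"
  by (simp add: blk2_eq_iff mat_def)

lemma norm_vec2_le: "norm (x::'b::real_normed_vector^2) \<le> norm (x$1) + norm (x$2)"
  unfolding norm_vec_def by (rule order_trans[OF L2_set_le_sum]) (auto simp: sum_2)

lemma norm_blk2_le: "norm (blk2 a b c d) \<le> norm a + norm b + norm c + norm d"
  using norm_vec2_le[of "blk2 a b c d"] norm_vec2_le[of "blk2 a b c d $ 1"]
    norm_vec2_le[of "blk2 a b c d $ 2"]
  by simp

lemma mpow_blk2_diag: "mpow (blk2 a 0 0 d) n = blk2 (a ^ n) 0 0 (d ^ n)"
  by (induction n) (simp_all add: mat_1_eq_blk2 blk2_mult)

definition geom_sum :: "complex \<Rightarrow> nat \<Rightarrow> complex" where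
  "geom_sum lam n = (\<Sum>j<n. lam ^ j)"

text \<open>The truncated exponent \<open>k - 1\<close> is harmless at \<open>k = 0\<close>, where \<open>geom_sum lam 0 = 0\<close>.\<close>

definition geom_sum2 :: "complex \<Rightarrow> nat \<Rightarrow> complex" where
  "geom_sum2 lam n = (\<Sum>k<n. geom_sum lam k * lam ^ (k - 1))"

lemma geom_sum_simps:
  "geom_sum lam 0 = 0" "geom_sum lam (Suc n) = geom_sum lam n + lam ^ n"
  by (simp_all add: geom_sum_def)

lemma geom_sum2_simps:
  "geom_sum2 lam 0 = 0" "geom_sum2 lam (Suc n) = geom_sum2 lam n + geom_sum lam n * lam ^ (n - 1)"
  by (simp_all add: geom_sum2_def)

lemma mpow_blk2_intertwining:
  fixes a d B C :: "'a::complex_banach_algebra_1"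
  assumes BC: "B * C = 0" and Bd: "B * d = scaleC lam (a * B)" and Ca: "C * a = scaleC lam (d * C)"
  shows "mpow (blk2 a B C d) n = blk2 (a ^ n) (scaleC (geom_sum lam n) (a ^ (n - 1) * B))
     (scaleC (geom_sum lam n) (d ^ (n - 1) * C))
     (d ^ n + scaleC (geom_sum2 lam n) (d ^ (n - 2) * C * B))"
proof (induction n)
  case 0
  then show ?case by (simp add: mat_1_eq_blk2 geom_sum_simps geom_sum2_simps)
next
  case (Suc n)
  have Bd': "B * (d ^ m * X) = scaleC (lam ^ m) (a ^ m * (B * X))" for m X
    using scaleC_power_intertwining[OF Bd, of m] by (metis mult.assoc mult_scaleC_left)
  have Ca': "C * (a ^ m * X) = scaleC (lam ^ m) (d ^ m * (C * X))" for m X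
    using scaleC_power_intertwining[OF Ca, of m] by (metis mult.assoc mult_scaleC_left)
  have BC': "B * (C * X) = 0" for X
    using BC by (metis mult.assoc mult_zero_left)
  have pa: "a * (a ^ k * X) = a ^ Suc k * X" and pd: "d * (d ^ k * X) = d ^ Suc k * X" for k X
    by (simp_all add: mult.assoc)
  have e11: "a * a ^ n + B * scaleC (geom_sum lam n) (d ^ (n - 1) * C) = a ^ Suc n"
    by (simp add: mult_scaleC_right Bd' mult.assoc BC)
  have e12: "a * scaleC (geom_sum lam n) (a ^ (n - 1) * B)
      + B * (d ^ n + scaleC (geom_sum2 lam n) (d ^ (n - 2) * C * B))
      = scaleC (geom_sum lam (Suc n)) (a ^ (Suc n - 1) * B)"
  proof (cases n)
    case 0
    then show ?thesis by (simp add: geom_sum_simps geom_sum2_simps scaleC_one)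
  next
    case (Suc m)
    then show ?thesis
      by (simp add: mult_scaleC_right distrib_left Bd' BC' scaleC_power_intertwining[OF Bd]
          mult.assoc scaleC_add_left pa geom_sum_simps del: power_Suc)
  qed
  have e21: "C * a ^ n + d * scaleC (geom_sum lam n) (d ^ (n - 1) * C)
      = scaleC (geom_sum lam (Suc n)) (d ^ (Suc n - 1) * C)"
  proof (cases n)
    case 0
    then show ?thesis by (simp add: geom_sum_simps geom_sum2_simps scaleC_one)
  next
    case (Suc m)
    then show ?thesis
      by (simp add: mult_scaleC_right scaleC_power_intertwining[OF Ca] mult.assoc scaleC_add_left
          add.commute pd distrib_left geom_sum_simps del: power_Suc)
  qed
  have e22: "C * scaleC (geom_sum lam n) (a ^ (n - 1) * B)
      + d * (d ^ n + scaleC (geom_sum2 lam n) (d ^ (n - 2) * C * B))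
      = d ^ Suc n + scaleC (geom_sum2 lam (Suc n)) (d ^ (Suc n - 2) * C * B)"
  proof (cases "n \<le> 1")
    case True
    then consider "n = 0" | "n = Suc 0" by linarith
    then show ?thesis
    proof cases
      case 1
      then show ?thesis by (simp add: geom_sum_simps geom_sum2_simps)
    next
      case 2
      then show ?thesis by (simp add: geom_sum_simps geom_sum2_simps scaleC_one mult.assoc)
    qed
  next
    case False
    then have "2 \<le> n" by simp
    then obtain k where "n = Suc (Suc k)" by (metis add_2_eq_Suc le_Suc_ex)
    moreover have "d * d ^ j = d ^ Suc j" for j by simp
    ultimately show ?thesis
      by (simp add: mult_scaleC_right distrib_left Ca' mult.assoc geom_sum2_simps scaleC_add_left
          scaleC_scaleC add.commute add.left_commute mult.commute pd del: power_Suc)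
  qed
  show ?case
    using Suc.IH e11 e12 e21 e22 by (simp add: blk2_mult)
qed

lemma norm_geom_sum_le: "cmod (geom_sum lam n) \<le> (2 + cmod lam) ^ n"
proof (induction n)
  case 0
  then show ?case by (simp add: geom_sum_simps)
next
  case (Suc n)
  have "cmod (geom_sum lam (Suc n)) \<le> cmod (geom_sum lam n) + cmod lam ^ n"
    by (metis geom_sum_simps(2) norm_power norm_triangle_ineq)
  also have "\<dots> \<le> (2 + cmod lam) ^ n + (2 + cmod lam) ^ n"
    using Suc by (intro add_mono power_mono) auto
  also have "\<dots> \<le> (2 + cmod lam) ^ Suc n"
    by (simp, intro mult_right_mono) auto
  finally show ?case .
qed

lemma norm_geom_sum2_le: "cmod (geom_sum2 lam n) \<le> ((2 + cmod lam)\<^sup>2) ^ n"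
proof (induction n)
  case 0
  then show ?case by (simp add: geom_sum2_simps)
next
  case (Suc n)
  define K where "K = 2 + cmod lam"
  have K: "K \<ge> 2" by (simp add: K_def)
  have "cmod (geom_sum2 lam (Suc n)) \<le> cmod (geom_sum2 lam n) + cmod (geom_sum lam n) * cmod lam ^ (n - 1)"
    by (metis geom_sum2_simps(2) norm_mult norm_power norm_triangle_ineq)
  also have "\<dots> \<le> (K\<^sup>2) ^ n + K ^ n * K ^ n"
  proof (intro add_mono mult_mono)
    have "cmod lam ^ (n - 1) \<le> K ^ (n - 1)"
      by (intro power_mono) (auto simp: K_def)
    also have "\<dots> \<le> K ^ n"
      using K by (intro power_increasing) auto
    finally show "cmod lam ^ (n - 1) \<le> K ^ n" .
  qed (use Suc norm_geom_sum_le[of lam n] in \<open>auto simp: K_def\<close>)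
  also have "\<dots> = 2 * (K\<^sup>2) ^ n"
    by (simp add: power_mult_distrib[symmetric] power2_eq_square)
  also have "\<dots> \<le> K\<^sup>2 * (K\<^sup>2) ^ n"
  proof (intro mult_right_mono)
    show "2 \<le> K\<^sup>2"
      using K mult_mono[of 2 K 1 K] by (simp add: power2_eq_square)
  qed simp
  finally show ?case by (simp add: K_def)
qed

lemma superexp_decay_scaleC_power_mult:
  fixes x y :: "'a::complex_banach_algebra_1"
  assumes "quasinilpotent x" and "L > 0" and "\<And>n. cmod (c n) \<le> L ^ n"
  shows "superexp_decay (\<lambda>n. norm (scaleC (c n) (x ^ (n - k) * y)))"
proof (rule superexp_decay_geometric_mult[OF _ assms(2) norm_ge_zero])
  show "superexp_decay (\<lambda>n. norm (x ^ (n - k)))"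
    by (rule superexp_decay_shift[OF quasinilpotent_superexp_decay[OF assms(1)]])
  fix n
  have "norm (scaleC (c n) (x ^ (n - k) * y)) \<le> L ^ n * (norm (x ^ (n - k)) * norm y)"
    unfolding norm_scaleC using assms(2) by (intro mult_mono assms(3) norm_mult_ineq) auto
  then show "norm (scaleC (c n) (x ^ (n - k) * y)) \<le> norm y * L ^ n * norm (x ^ (n - k))"
    by (simp add: mult_ac)
qed

lemma mquasinilpotent_blk2:
  fixes a d B C :: "'a::complex_banach_algebra_1"
  assumes BC: "B * C = 0" and Bd: "B * d = scaleC lam (a * B)" and Ca: "C * a = scaleC lam (d * C)"
    and qa: "quasinilpotent a" and qd: "quasinilpotent d"
  shows "mquasinilpotent (blk2 a B C d)"
proof -
  define K where "K = (2 + cmod lam)\<^sup>2"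
  have "2 + cmod lam > 0" by (simp add: add_pos_nonneg)
  then have K: "K > 0" by (simp add: K_def)
  have coeff: "cmod (geom_sum lam n) \<le> K ^ n" for n
  proof -
    have "(2 + cmod lam) ^ n \<le> (2 + cmod lam) ^ (2 * n)"
      by (intro power_increasing) auto
    then show ?thesis
      using norm_geom_sum_le[of lam n] by (simp add: K_def power_mult)
  qed
  have coeff2: "cmod (geom_sum2 lam n) \<le> K ^ n" for n
    unfolding K_def by (rule norm_geom_sum2_le)
  let ?bound = "\<lambda>n. norm (a ^ n) + norm (scaleC (geom_sum lam n) (a ^ (n - 1) * B))
    + norm (scaleC (geom_sum lam n) (d ^ (n - 1) * C))
    + (norm (d ^ n) + norm (scaleC (geom_sum2 lam n) (d ^ (n - 2) * (C * B))))"
  have "norm (mpow (blk2 a B C d) n) \<le> ?bound n" for n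
    unfolding mpow_blk2_intertwining[OF BC Bd Ca] mult.assoc[of _ C B]
    by (rule order_trans[OF norm_blk2_le]) (intro add_mono order_refl norm_triangle_ineq)
  moreover have "superexp_decay ?bound"
    by (intro superexp_decay_add quasinilpotent_superexp_decay
        superexp_decay_scaleC_power_mult[where L = K] qa qd K coeff coeff2)
  ultimately have "superexp_decay (\<lambda>n. norm (mpow (blk2 a B C d) n))"
    using superexp_decay_geometric_mult[where L = 1 and M = 1] by simp
  then show ?thesis
    unfolding mquasinilpotent_def by (rule superexp_decay_root_tendsto_zero) simp
qed

lemma mgdrazin_inv_blk2_diag:
  fixes A B C D Ad Dd :: "'a::real_normed_algebra_1"
  assumes gA: "gdrazin_inv A Ad" and gD: "gdrazin_inv D Dd"
    and BDd: "B * Dd = 0" and AdB: "Ad * B = 0" and CAd: "C * Ad = 0" and DdC: "Dd * C = 0"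
    and qn: "mquasinilpotent (blk2 (A - A\<^sup>2 * Ad) B C (D - D\<^sup>2 * Dd))"
  shows "mgdrazin_inv (blk2 A B C D) (blk2 Ad 0 0 Dd)"
proof -
  have AAd: "Ad * A = A * Ad" "A * (Ad * Ad) = Ad"
    using gA unfolding gdrazin_inv_def by (metis mult.assoc)+
  have DDd: "Dd * D = D * Dd" "D * (Dd * Dd) = Dd"
    using gD unfolding gdrazin_inv_def by (metis mult.assoc)+
  have "B * (D * Dd) = 0" "C * (A * Ad) = 0"
    using AAd(1) DDd(1) BDd CAd by (metis mult.assoc mult_zero_left)+
  then have "blk2 A B C D ** blk2 A B C D ** blk2 Ad 0 0 Dd = blk2 (A\<^sup>2 * Ad) 0 0 (D\<^sup>2 * Dd)"
    using BDd CAd by (simp add: blk2_mult power2_eq_square mult.assoc distrib_right)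
  then show ?thesis
    unfolding mgdrazin_inv_def
    using AAd DDd BDd AdB CAd DdC qn by (simp add: blk2_mult blk2_diff mult.assoc)
qed

theorem corollary3p2:
  fixes A B C D Ad Dd :: "'a::complex_banach_algebra_1" and lam :: complex
  assumes "lam \<noteq> 0"
    and "gdrazin_inv A Ad" and "gdrazin_inv D Dd"
    and "B * D = scaleC lam (A * B * (1 - D * Dd))"
    and "C * A = scaleC lam (D * C * (1 - A * Ad))"
    and "B * C = 0"
  shows "summable (\<lambda>n. mpow (blk2 Ad 0 0 Dd) (n + 2) ** blk2 0 B C 0 ** mpow (blk2 A B C D) n)
    \<and> mgdrazin_inv (blk2 A B C D)
        (blk2 Ad 0 0 Dd + (\<Sum>n. mpow (blk2 Ad 0 0 Dd) (n + 2) ** blk2 0 B C 0 ** mpow (blk2 A B C D) n))"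
proof -
  note relB = gdrazin_intertwining[OF assms(1,2,3,4)]
  note relC = gdrazin_intertwining[OF assms(1,3,2,5)]
  have "Ad ^ (n + 2) * B = 0" "Dd ^ (n + 2) * C = 0" for n
    using relB(2) relC(2) by (simp_all add: power_Suc2 mult.assoc del: power_Suc)
  then have series_zero:
    "(\<lambda>n. mpow (blk2 Ad 0 0 Dd) (n + 2) ** blk2 0 B C 0 ** mpow (blk2 A B C D) n) = (\<lambda>n. 0)"
    by (simp add: mpow_blk2_diag blk2_mult flip: zero_eq_blk2)
  have "quasinilpotent (A - A\<^sup>2 * Ad)" "quasinilpotent (D - D\<^sup>2 * Dd)"
    using assms(2,3) unfolding gdrazin_inv_def by auto
  then have "mquasinilpotent (blk2 (A - A\<^sup>2 * Ad) B C (D - D\<^sup>2 * Dd))"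
    by (rule mquasinilpotent_blk2[OF assms(6) relB(3) relC(3)])
  then have "mgdrazin_inv (blk2 A B C D) (blk2 Ad 0 0 Dd)"
    by (rule mgdrazin_inv_blk2_diag[OF assms(2,3) relB(1,2) relC(1,2)])
  then show ?thesis
    unfolding series_zero by simp
qed

end
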